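(* For all pure $\lambda$-terms $v, v'$: $v \Downarrow_h v'$ if and only if $v \Downarrow_{sf} v'$.
   Context: Pure $\lambda$-terms: $v ::= x \mid v\,v \mid \lambda x.v$, with capture-avoiding substitution; "$u \not\equiv \lambda x.w$" means $u$ is not a $\lambda$-abstraction. Weak-head big-step relation $\Downarrow_{wh}$, inductively defined by: $x \Downarrow_{wh} x$; $\lambda x.v \Downarrow_{wh} \lambda x.v$; if $v_1 \Downarrow_{wh} \lambda x.v_1'$ and $v_1'[v_2/x] \Downarrow_{wh} v$ then $v_1\,v_2 \Downarrow_{wh} v$; if $v_1 \Downarrow_{wh} v_1'$ and $v_1' \not\equiv \lambda x.w$ then $v_1\,v_2 \Downarrow_{wh} v_1'\,v_2$. Head big-step relation $\Downarrow_h$: if $v \Downarrow_{wh} \lambda x.v'$ and $v' \Downarrow_h v''$ then $v \Downarrow_h \lambda x.v''$; if $v \Downarrow_{wh} v'$ and $v' \not\equiv \lambda x.w$ then $v \Downarrow_h v'$. Sestoft's head big-step relation $\Downarrow_{sf}$: $x \Downarrow_{sf} x$; if $v \Downarrow_{sf} v'$ then $\lambda x.v \Downarrow_{sf} \lambda x.v'$; if $v_1 \Downarrow_{wh} v_1'$ and $v_1' \not\equiv \lambda x.w$ then $v_1\,v_2 \Downarrow_{sf} v_1'\,v_2$; if $v_1 \Downarrow_{wh} \lambda x.v_1'$ and $v_1'[v_2/x] \Downarrow_{sf} v$ then $v_1\,v_2 \Downarrow_{sf} v$. *)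

theory Defs
  imports Main
begin

text \<open>Pure lambda-terms modulo alpha-equivalence, in de Bruijn representation.
  Free variables are indices not bound by enclosing abstractions.\<close>

datatype dB = Var nat | App dB dB | Abs dB

fun lift :: "dB \<Rightarrow> nat \<Rightarrow> dB" where
  "lift (Var i) k = (if i < k then Var i else Var (Suc i))"
| "lift (App s t) k = App (lift s k) (lift t k)"
| "lift (Abs s) k = Abs (lift s (Suc k))"

text \<open>Capture-avoiding substitution: subst t s k = t[s/k], removing index k.\<close>
fun subst :: "dB \<Rightarrow> dB \<Rightarrow> nat \<Rightarrow> dB" where
  "subst (Var i) s k = (if k < i then Var (i - 1) else if i = k then s else Var i)"
| "subst (App t u) s k = App (subst t s k) (subst u s k)"
| "subst (Abs t) s k = Abs (subst t (lift s 0) (Suc k))"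

fun is_abs :: "dB \<Rightarrow> bool" where
  "is_abs (Abs _) = True"
| "is_abs _ = False"

inductive wh :: "dB \<Rightarrow> dB \<Rightarrow> bool" where
  wh_var: "wh (Var x) (Var x)"
| wh_abs: "wh (Abs v) (Abs v)"
| wh_beta: "wh v1 (Abs v1') \<Longrightarrow> wh (subst v1' v2 0) v \<Longrightarrow> wh (App v1 v2) v"
| wh_app: "wh v1 v1' \<Longrightarrow> \<not> is_abs v1' \<Longrightarrow> wh (App v1 v2) (App v1' v2)"

inductive hd_ev :: "dB \<Rightarrow> dB \<Rightarrow> bool" where
  h_abs: "wh v (Abs v') \<Longrightarrow> hd_ev v' v'' \<Longrightarrow> hd_ev v (Abs v'')"
| h_nonabs: "wh v v' \<Longrightarrow> \<not> is_abs v' \<Longrightarrow> hd_ev v v'"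

text \<open>Sestoft's head big-step evaluation.\<close>
inductive sf :: "dB \<Rightarrow> dB \<Rightarrow> bool" where
  sf_var: "sf (Var x) (Var x)"
| sf_abs: "sf v v' \<Longrightarrow> sf (Abs v) (Abs v')"
| sf_app: "wh v1 v1' \<Longrightarrow> \<not> is_abs v1' \<Longrightarrow> sf (App v1 v2) (App v1' v2)"
| sf_beta: "wh v1 (Abs v1') \<Longrightarrow> sf (subst v1' v2 0) v \<Longrightarrow> sf (App v1 v2) v"

end

theory Submission
  imports Defs
begin

text \<open>Head evaluation runs weak-head evaluation to completion and then recurses under the
  resulting abstraction, whereas Sestoft's relation inlines the weak-head beta steps into its
  own derivation. Hence each direction is a rule induction: a weak-head derivation can be
  replayed with the beta rule of Sestoft's relation, and conversely that beta rule is
  admissible for head evaluation because it just prefixes the weak-head phase.\<close>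

lemma sf_if_wh_Abs: "wh v (Abs b) \<Longrightarrow> sf b b' \<Longrightarrow> sf v (Abs b')"
proof (induction v "Abs b" rule: wh.induct)
  case wh_abs
  then show ?case by (rule sf_abs)
next
  case (wh_beta v1 v1' v2)
  then show ?case by (blast intro: sf_beta)
qed

lemma sf_if_wh_not_abs: "wh v w \<Longrightarrow> \<not> is_abs w \<Longrightarrow> sf v w"
proof (induction rule: wh.induct)
  case (wh_var x)
  show ?case by (rule sf_var)
next
  case (wh_abs v)
  then show ?case by simp
next
  case (wh_beta v1 v1' v2 v)
  then show ?case by (blast intro: sf_beta)
next
  case (wh_app v1 v1' v2)
  then show ?case by (blast intro: sf_app)
qed

lemma sf_if_hd_ev: "hd_ev v v' \<Longrightarrow> sf v v'"
proof (induction rule: hd_ev.induct)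
  case (h_abs v b b')
  then show ?case by (blast intro: sf_if_wh_Abs)
next
  case (h_nonabs v v')
  then show ?case by (rule sf_if_wh_not_abs)
qed

lemma hd_ev_beta:
  assumes head: "wh v1 (Abs b)" and body: "hd_ev (subst b v2 0) u"
  shows "hd_ev (App v1 v2) u"
  using body
proof cases
  case (h_abs w w')
  then show ?thesis using head by (blast intro: hd_ev.h_abs wh_beta)
next
  case h_nonabs
  then show ?thesis using head by (blast intro: hd_ev.h_nonabs wh_beta)
qed

lemma hd_ev_if_sf: "sf v v' \<Longrightarrow> hd_ev v v'"
proof (induction rule: sf.induct)
  case (sf_var x)
  show ?case by (simp add: h_nonabs wh_var)
next
  case (sf_abs v v')
  then show ?case by (blast intro: h_abs wh_abs)
next
  case (sf_app v1 v1' v2)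
  then show ?case by (simp add: h_nonabs wh_app)
next
  case (sf_beta v1 v1' v2 v)
  then show ?case by (blast intro: hd_ev_beta)
qed

theorem theorem5:
  shows "hd_ev v v' \<longleftrightarrow> sf v v'"
  using sf_if_hd_ev hd_ev_if_sf by blast

end
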